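(* Let $\mathbb{K}$ be any field and let $$\beta=[0;t,t^5,t^9,t^{13},\dots]\quad\text{and}\quad\gamma=[0;t^3,t^7,t^{11},t^{15},\dots],$$ i.e. $a_n(\beta)=t^{4n-3}$ and $a_n(\gamma)=t^{4n-1}$ for all $n\ge1$, and let $\alpha=\beta+\gamma$. Then the algorithm described in the context, applied to $\alpha$, never stops and produces $b_n=t^{4n-3}$ and $c_n=t^{4n-1}$ for all $n\ge1$; in particular it returns exactly $\beta$ and $\gamma$. (Hence the degree bounds $\deg c_1\ge 2\deg b_1+1$, $\deg b_n\ge\deg c_{n-1}+2$, $\deg c_n\ge\deg b_n+2$ satisfied by the algorithm's output are attained with equality.)
   Context: $\mathbb{K}((t^{-1}))$ is the field of formal Laurent series over a field $\mathbb{K}$. Every $\alpha$ has a unique continued fraction expansion $[a_0;a_1,\dots]$ with $a_n\in\mathbb{K}[t]$, $\deg a_n\ge1$ for $n\ge1$; $a_n(\alpha)$ denotes its $n$-th partial quotient. Algorithm: given $\alpha$ with $a_0(\alpha)=0$, for $n=0,1,2,\dots$, with $b_1,\dots,b_n,c_1,\dots,c_n$ defined: if $\alpha=[0;b_1,\dots,b_n]+[0;c_1,\dots,c_n]$, output $\beta=[0;b_1,\dots,b_n]$, $\gamma=[0;c_1,\dots,c_n]$ and stop. Otherwise set $b_{n+1}=a_{n+1}(\alpha-[0;c_1,\dots,c_n])$. If then $\alpha=[0;b_1,\dots,b_{n+1}]+[0;c_1,\dots,c_n]$, output $\beta=[0;b_1,\dots,b_{n+1}]$, $\gamma=[0;c_1,\dots,c_n]$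 and stop. Otherwise set $c_{n+1}=a_{n+1}(\alpha-[0;b_1,\dots,b_{n+1}])$ and continue. If it never stops, output $\beta=[0;b_1,b_2,\dots]$, $\gamma=[0;c_1,c_2,\dots]$. *)

theory Defs
  imports "HOL-Computational_Algebra.Formal_Laurent_Series"
begin

text \<open>We model K((t^-1)) as the type of formal Laurent series 'a fls in the variable
  X = t^-1 (finitely many negative powers of X = finitely many positive powers of t).
  Polynomials in t are 'a poly, embedded via t |-> fls_X_inv.\<close>

definition tpoly :: "'a::field poly \<Rightarrow> 'a fls" where
  "tpoly p = poly (map_poly fls_const p) fls_X_inv"

text \<open>Polynomial part (the partial quotient a_0): all terms t^k with k >= 0.\<close>
definition cf_floor :: "'a::field fls \<Rightarrow> 'a poly" where
  "cf_floor x = fls_prpart x + [: fls_nth x 0 :]"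

definition cf_frac :: "'a::field fls \<Rightarrow> 'a fls" where
  "cf_frac x = x - tpoly (cf_floor x)"

text \<open>Complete quotients alpha_n; if the expansion terminates they become 0
  (inverse 0 = 0), and then the corresponding partial quotients are 0.\<close>
fun cf_rem :: "'a::field fls \<Rightarrow> nat \<Rightarrow> 'a fls" where
  "cf_rem x 0 = x"
| "cf_rem x (Suc n) = inverse (cf_frac (cf_rem x n))"

definition pq :: "'a::field fls \<Rightarrow> nat \<Rightarrow> 'a poly" where
  "pq x n = cf_floor (cf_rem x n)"

fun fcf :: "'a::field poly list \<Rightarrow> 'a fls" where
  "fcf [] = 0"
| "fcf (a # as) = inverse (tpoly a + fcf as)"

declare [[typedef_overloaded]]
datatype 'a alg_state = Running "'a poly list" "'a poly list" | Stopped "'a fls" "'a fls"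

text \<open>State of the algorithm after n rounds: Running [b_1..b_n] [c_1..c_n], or
  Stopped beta gamma if it has stopped with that output.\<close>
fun cf_alg :: "'a::field fls \<Rightarrow> nat \<Rightarrow> 'a alg_state" where
  "cf_alg x 0 = Running [] []"
| "cf_alg x (Suc n) =
     (case cf_alg x n of
        Stopped u v \<Rightarrow> Stopped u v
      | Running bs cs \<Rightarrow>
          (if x = fcf bs + fcf cs then Stopped (fcf bs) (fcf cs)
           else (let bs' = bs @ [pq (x - fcf cs) (Suc n)] in
                 if x = fcf bs' + fcf cs then Stopped (fcf bs') (fcf cs)
                 else Running bs' (cs @ [pq (x - fcf bs') (Suc n)]))))"

end

theory Submission
  imports Defs
begin

text \<open>Write \<open>v = fls_subdegree\<close>, so that \<open>v = - deg\<close> on \<open>\<bbbK>((t\<^sup>-\<^sup>1))\<close>. Two classical facts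
  about the convergents \<open>p\<^sub>k/q\<^sub>k\<close> of \<open>x\<close> drive the proof: \<open>v(x - p\<^sub>k/q\<^sub>k) = deg q\<^sub>k + deg q\<^sub>k\<^sub>+\<^sub>1\<close>,
  and every \<open>y\<close> with \<open>v(y - x) > 2 deg q\<^sub>k\<close> shares the partial quotients \<open>a\<^sub>0, \<dots>, a\<^sub>k\<close> of \<open>x\<close>.
  In round \<open>n + 1\<close> the algorithm expands \<open>\<alpha> - [0; c\<^sub>1, \<dots>, c\<^sub>n] = \<beta> + (\<gamma> - [0; c\<^sub>1, \<dots>, c\<^sub>n])\<close>,
  a perturbation of \<open>\<beta>\<close> too small to change \<open>a\<^sub>n\<^sub>+\<^sub>1(\<beta>)\<close> as soon as the degrees of the
  denominators of \<open>\<beta>\<close> and \<open>\<gamma>\<close> interleave suitably; symmetrically for \<open>c\<^sub>n\<^sub>+\<^sub>1\<close>. The stopping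
  tests fail because the errors of the convergents of \<open>\<beta>\<close> and of \<open>\<gamma>\<close> then have different
  valuations. For the given \<open>\<beta>, \<gamma>\<close> one has \<open>deg q\<^sub>n(\<beta>) = 2n\<^sup>2 - n\<close> and \<open>deg q\<^sub>n(\<gamma>) = 2n\<^sup>2 + n\<close>,
  and the interleaving inequalities hold with margin exactly one.\<close>

unbundle fps_syntax

lemma tpoly_pCons: "tpoly (pCons a p) = fls_const a + fls_X_inv * tpoly (p :: 'a::field poly)"
  by (simp add: tpoly_def map_poly_pCons)

lemma tpoly_nth: "tpoly (p :: 'a::field poly) $$ n = (if n \<le> 0 then coeff p (nat (- n)) else 0)"
proof (induction p arbitrary: n)
  case (pCons a p)
  show ?case
    by (auto simp: tpoly_pCons fls_X_inv_times_conv_shift pCons.IH coeff_pCons nat_diff_distrib'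
        split: nat.split)
qed (simp add: tpoly_def)

lemma coeff_cf_floor: "coeff (cf_floor x) i = x $$ (- int i)"
  by (cases i) (auto simp: cf_floor_def)

lemma cf_frac_nth: "cf_frac x $$ n = (if n \<le> 0 then 0 else x $$ n)"
  by (simp add: cf_frac_def tpoly_nth coeff_cf_floor)

lemma cf_floor_add: "cf_floor (x + y) = cf_floor x + cf_floor y"
  by (rule poly_eqI) (simp add: coeff_cf_floor)

lemma cf_frac_add: "cf_frac (x + y) = cf_frac x + cf_frac y"
  by (rule fls_eqI) (simp add: cf_frac_nth)

lemma cf_floor_tpoly [simp]: "cf_floor (tpoly p) = p"
  by (rule poly_eqI) (simp add: coeff_cf_floor tpoly_nth)

lemma cf_frac_eq_self: "cf_floor x = 0 \<Longrightarrow> cf_frac x = x"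
  by (simp add: cf_frac_def tpoly_def)

lemma cf_floor_eq_0_iff: "cf_floor x = 0 \<longleftrightarrow> x = 0 \<or> 0 < fls_subdegree x"
proof
  assume "cf_floor x = 0"
  then have "x $$ n = 0" if "n \<le> 0" for n
    using that coeff_cf_floor[of x "nat (- n)"] by simp
  then show "x = 0 \<or> 0 < fls_subdegree x"
    by (metis nth_fls_subdegree_nonzero not_less)
next
  assume "x = 0 \<or> 0 < fls_subdegree x"
  then show "cf_floor x = 0"
    by (auto intro!: poly_eqI simp: coeff_cf_floor intro: fls_eq0_below_subdegree)
qed

lemma cf_floor_degree_pos:
  assumes "0 < degree (cf_floor x)"
  shows "x \<noteq> 0" and "fls_subdegree x = - int (degree (cf_floor x))"
proof -
  let ?d = "degree (cf_floor x)"
  have lead: "x $$ (- int ?d) \<noteq> 0"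
    using assms coeff_cf_floor[of x ?d] by (metis degree_0 leading_coeff_0_iff less_irrefl)
  have below: "x $$ k = 0" if "k < - int ?d" for k
    using that coeff_eq_0[of "cf_floor x" "nat (- k)"] coeff_cf_floor[of x "nat (- k)"] by simp
  from lead show "x \<noteq> 0" by auto
  from lead below show "fls_subdegree x = - int ?d" by (rule fls_subdegree_eqI)
qed

lemma fls_subdegree_tpoly_add:
  assumes "0 < degree a" "cf_floor g = 0"
  shows "tpoly a + g \<noteq> 0" and "fls_subdegree (tpoly a + g) = - int (degree a)"
  using cf_floor_degree_pos[of "tpoly a + g"] assms by (simp_all add: cf_floor_add)

lemma fls_subdegree_inverse_diff:
  fixes a b :: "'a::field fls"
  assumes "a \<noteq> 0" "b \<noteq> 0" "a \<noteq> b"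
  shows "inverse a \<noteq> inverse b"
    and "fls_subdegree (inverse a - inverse b) = fls_subdegree (a - b) - fls_subdegree a - fls_subdegree b"
proof -
  have eq: "inverse a - inverse b = - (a - b) * inverse a * inverse b"
    using assms by (simp add: field_simps)
  show "inverse a \<noteq> inverse b" using assms by simp
  show "fls_subdegree (inverse a - inverse b) = fls_subdegree (a - b) - fls_subdegree a - fls_subdegree b"
    unfolding eq using assms by (simp add: fls_subdegree_minus_sym)
qed

lemma pq_0: "pq x 0 = cf_floor x"
  by (simp add: pq_def)

lemma cf_rem_Suc_shift: "cf_rem x (Suc n) = cf_rem (inverse (cf_frac x)) n"
  by (induction n) auto

lemma pq_Suc: "pq x (Suc i) = pq (inverse (cf_frac x)) i"
  by (simp only: pq_def cf_rem_Suc_shift)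

lemma map_pq_upt_Suc: "map (pq x) [Suc m..<Suc n] = map (pq (inverse (cf_frac x))) [m..<n]"
  by (simp add: map_Suc_upt[symmetric] comp_def pq_Suc del: upt_Suc)

lemma fls_subdegree_cf_frac:
  assumes "0 < degree (pq x 1)"
  shows "cf_frac x \<noteq> 0" and "fls_subdegree (cf_frac x) = int (degree (pq x 1))"
  using cf_floor_degree_pos[of "inverse (cf_frac x)"] assms by (simp_all add: pq_Suc pq_0)

definition cf_convergent :: "'a::field fls \<Rightarrow> nat \<Rightarrow> 'a fls" where
  "cf_convergent x k = fcf (map (pq x) [1..<Suc k])"

text \<open>\<open>deg q\<^sub>k\<close> for the denominator of the \<open>k\<close>-th convergent, via \<open>q\<^sub>k = a\<^sub>k q\<^sub>k\<^sub>-\<^sub>1 + q\<^sub>k\<^sub>-\<^sub>2\<close>.\<close>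
definition cf_denom_degree :: "'a::field fls \<Rightarrow> nat \<Rightarrow> nat" where
  "cf_denom_degree x k = (\<Sum>j=1..k. degree (pq x j))"

lemma cf_convergent_Suc:
  "cf_convergent x (Suc k) = inverse (tpoly (pq x 1) + cf_convergent (inverse (cf_frac x)) k)"
  using map_pq_upt_Suc[of x 1 "Suc k"] by (simp add: cf_convergent_def upt_conv_Cons del: upt_Suc)

lemma cf_denom_degree_Suc:
  "cf_denom_degree x (Suc k) = degree (pq x 1) + cf_denom_degree (inverse (cf_frac x)) k"
  by (simp add: cf_denom_degree_def sum.atLeast_Suc_atMost sum.atLeast_Suc_atMost_Suc_shift pq_Suc
      del: sum.cl_ivl_Suc)

lemma cf_denom_degree_less_Suc:
  "0 < degree (pq x (Suc k)) \<Longrightarrow> cf_denom_degree x k < cf_denom_degree x (Suc k)"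
  by (simp add: cf_denom_degree_def)

lemma cf_floor_fcf: "(\<forall>a\<in>set as. 0 < degree a) \<Longrightarrow> cf_floor (fcf as) = 0"
proof (induction as)
  case (Cons a as)
  then have "tpoly a + fcf as \<noteq> 0" "fls_subdegree (tpoly a + fcf as) = - int (degree a)"
    using fls_subdegree_tpoly_add[of a "fcf as"] by auto
  with Cons.prems show ?case by (simp add: cf_floor_eq_0_iff)
qed (simp add: cf_floor_eq_0_iff)

lemma cf_floor_cf_convergent:
  "(\<forall>j\<in>{1..k}. 0 < degree (pq x j)) \<Longrightarrow> cf_floor (cf_convergent x k) = 0"
  unfolding cf_convergent_def by (rule cf_floor_fcf) auto

lemma cf_convergent_error_frac:
  "(\<forall>j\<in>{1..Suc k}. 0 < degree (pq x j)) \<Longrightarrow>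
   cf_frac x \<noteq> cf_convergent x k \<and>
   fls_subdegree (cf_frac x - cf_convergent x k) = int (cf_denom_degree x k + cf_denom_degree x (Suc k))"
proof (induction k arbitrary: x)
  case 0
  then show ?case
    using fls_subdegree_cf_frac[of x] by (simp add: cf_convergent_def cf_denom_degree_def)
next
  case (Suc k)
  define x1 where "x1 = inverse (cf_frac x)"
  define a where "a = degree (pq x 1)"
  define q where "q = tpoly (pq x 1) + cf_convergent x1 k"
  have pq_x1: "pq x1 j = pq x (Suc j)" for j
    by (simp add: x1_def pq_Suc)
  have a_pos: "0 < a"
    using Suc.prems by (simp add: a_def)
  have x1_split: "x1 = tpoly (pq x 1) + cf_frac x1"
    by (simp add: cf_frac_def pq_x1[of 0, symmetric] pq_0)
  have x1: "x1 \<noteq> 0" "fls_subdegree x1 = - int a"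
    using cf_floor_degree_pos[of x1] a_pos by (simp_all add: a_def pq_x1[of 0, symmetric] pq_0)
  have IH: "cf_frac x1 \<noteq> cf_convergent x1 k"
    "fls_subdegree (cf_frac x1 - cf_convergent x1 k) =
       int (cf_denom_degree x1 k + cf_denom_degree x1 (Suc k))"
    using Suc.IH[of x1] Suc.prems by (auto simp: pq_x1)
  have "cf_floor (cf_convergent x1 k) = 0"
    using Suc.prems by (intro cf_floor_cf_convergent) (auto simp: pq_x1)
  then have q: "q \<noteq> 0" "fls_subdegree q = - int a"
    using fls_subdegree_tpoly_add[of "pq x 1"] a_pos by (simp_all add: q_def a_def)
  have diff: "x1 - q = cf_frac x1 - cf_convergent x1 k"
    by (subst x1_split) (simp add: q_def)
  then have "x1 \<noteq> q"
    using IH(1) by auto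
  moreover have "cf_frac x = inverse x1" "cf_convergent x (Suc k) = inverse q"
    by (simp_all add: x1_def q_def cf_convergent_Suc)
  ultimately show ?case
    using fls_subdegree_inverse_diff[of x1 q] x1 q IH diff
    by (simp add: cf_denom_degree_Suc[of x] x1_def[symmetric] a_def)
qed

lemma pq_add_eq:
  "\<forall>j\<in>{1..k}. 0 < degree (pq x j) \<Longrightarrow> \<delta> \<noteq> 0 \<Longrightarrow>
   2 * int (cf_denom_degree x k) < fls_subdegree \<delta> \<Longrightarrow> j \<le> k \<Longrightarrow> pq (x + \<delta>) j = pq x j"
proof (induction k arbitrary: x \<delta> j)
  case 0
  then have "cf_floor \<delta> = 0"
    by (simp add: cf_floor_eq_0_iff cf_denom_degree_def)
  with 0 show ?case
    by (simp add: pq_0 cf_floor_add)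
next
  case (Suc k)
  define a where "a = degree (pq x 1)"
  define x1 where "x1 = inverse (cf_frac x)"
  \<comment> \<open>the perturbation of the next complete quotient; its valuation drops by \<open>2 deg a\<^sub>1\<close>\<close>
  define \<delta>1 where "\<delta>1 = inverse (cf_frac x + \<delta>) - x1"
  have a_pos: "0 < a"
    using Suc.prems(1) by (simp add: a_def)
  have close: "2 * int a + 2 * int (cf_denom_degree x1 k) < fls_subdegree \<delta>"
    using Suc.prems(3) by (simp add: cf_denom_degree_Suc a_def x1_def)
  then have floor_\<delta>: "cf_floor \<delta> = 0"
    by (simp add: cf_floor_eq_0_iff)
  have frac_x: "cf_frac x \<noteq> 0" "fls_subdegree (cf_frac x) = int a"
    using fls_subdegree_cf_frac[of x] a_pos by (simp_all add: a_def)
  then have "cf_frac x + \<delta> \<noteq> 0" "fls_subdegree (cf_frac x + \<delta>) = int a"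
    using fls_subdegree_add_eq1[of "cf_frac x" \<delta>] close a_pos by auto
  then have "\<delta>1 \<noteq> 0" "fls_subdegree \<delta>1 = fls_subdegree \<delta> - 2 * int a"
    using fls_subdegree_inverse_diff[of "cf_frac x + \<delta>" "cf_frac x"] frac_x Suc.prems(2)
    by (simp_all add: \<delta>1_def x1_def)
  then have IH: "pq (x1 + \<delta>1) i = pq x1 i" if "i \<le> k" for i
    using Suc.IH[of x1 \<delta>1 i] Suc.prems(1) close that by (auto simp: x1_def pq_Suc[symmetric])
  have "x1 + \<delta>1 = inverse (cf_frac (x + \<delta>))"
    using floor_\<delta> by (simp add: \<delta>1_def cf_frac_add cf_frac_eq_self)
  then show ?case
    using IH floor_\<delta> Suc.prems(4)
    by (cases j) (simp_all add: pq_0 cf_floor_add pq_Suc x1_def)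
qed

lemma cf_convergent_error:
  assumes "pq x 0 = 0" "\<And>j. 0 < j \<Longrightarrow> 0 < degree (pq x j)"
  shows "x \<noteq> cf_convergent x n"
    and "fls_subdegree (x - cf_convergent x n) = int (cf_denom_degree x n + cf_denom_degree x (Suc n))"
  using cf_convergent_error_frac[of n x] assms cf_frac_eq_self[of x] by (simp_all add: pq_0)

lemma cf_alg_add:
  fixes \<beta> \<gamma> :: "'a::field fls"
  assumes "pq \<beta> 0 = 0" "pq \<gamma> 0 = 0"
    and "\<And>j. 0 < j \<Longrightarrow> 0 < degree (pq \<beta> j)" "\<And>j. 0 < j \<Longrightarrow> 0 < degree (pq \<gamma> j)"
    and "\<And>n. 2 * cf_denom_degree \<beta> (Suc n) < cf_denom_degree \<gamma> n + cf_denom_degree \<gamma> (Suc n)"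
    and "\<And>n. 2 * cf_denom_degree \<gamma> (Suc n) <
               cf_denom_degree \<beta> (Suc n) + cf_denom_degree \<beta> (Suc (Suc n))"
  shows "cf_alg (\<beta> + \<gamma>) n = Running (map (pq \<beta>) [1..<Suc n]) (map (pq \<gamma>) [1..<Suc n])"
proof -
  let ?E = "\<lambda>x n. cf_denom_degree x n + cf_denom_degree x (Suc n)"
  note error_\<beta> = cf_convergent_error[of \<beta>, OF assms(1,3)]
  note error_\<gamma> = cf_convergent_error[of \<gamma>, OF assms(2,4)]
  have sum_ne: "\<beta> + \<gamma> \<noteq> cf_convergent \<beta> m + cf_convergent \<gamma> n" if "?E \<beta> m \<noteq> ?E \<gamma> n" for m n
  proof
    assume "\<beta> + \<gamma> = cf_convergent \<beta> m + cf_convergent \<gamma> n"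
    then have "\<beta> - cf_convergent \<beta> m = cf_convergent \<gamma> n - \<gamma>"
      by (simp add: algebra_simps)
    then show False
      using that error_\<beta>(2)[of m] error_\<gamma>(2)[of n] by (simp add: fls_subdegree_minus_sym)
  qed
  have denom_mono: "cf_denom_degree \<beta> n < cf_denom_degree \<beta> (Suc n)"
    "cf_denom_degree \<gamma> n < cf_denom_degree \<gamma> (Suc n)" for n
    using assms(3,4) by (simp_all add: cf_denom_degree_less_Suc)
  have next_\<beta>: "pq (\<beta> + \<gamma> - cf_convergent \<gamma> n) (Suc n) = pq \<beta> (Suc n)" for n
  proof -
    have "2 * int (cf_denom_degree \<beta> (Suc n)) < fls_subdegree (\<gamma> - cf_convergent \<gamma> n)"
      using assms(5)[of n] error_\<gamma>(2)[of n] by linarith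
    then show ?thesis
      using pq_add_eq[of "Suc n" \<beta> "\<gamma> - cf_convergent \<gamma> n"] assms(3) error_\<gamma>(1)[of n] by (simp add: add_diff_eq)
  qed
  have next_\<gamma>: "pq (\<beta> + \<gamma> - cf_convergent \<beta> (Suc n)) (Suc n) = pq \<gamma> (Suc n)" for n
  proof -
    have "2 * int (cf_denom_degree \<gamma> (Suc n)) < fls_subdegree (\<beta> - cf_convergent \<beta> (Suc n))"
      using assms(6)[of n] error_\<beta>(2)[of "Suc n"] by linarith
    then show ?thesis
      using pq_add_eq[of "Suc n" \<gamma> "\<beta> - cf_convergent \<beta> (Suc n)"] assms(4) error_\<beta>(1)[of "Suc n"] by (simp add: algebra_simps)
  qed
  show ?thesis
  proof (induction n)
    case (Suc n)
    have "\<beta> + \<gamma> \<noteq> cf_convergent \<beta> n + cf_convergent \<gamma> n"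
      using denom_mono[of n] assms(5)[of n] by (intro sum_ne) linarith
    moreover have "\<beta> + \<gamma> \<noteq> cf_convergent \<beta> (Suc n) + cf_convergent \<gamma> n"
      using denom_mono[of n] assms(6)[of n] by (intro sum_ne) linarith
    ultimately show ?case
      using Suc.IH next_\<beta>[of n] next_\<gamma>[of n] by (simp add: Let_def cf_convergent_def)
  qed simp
qed

lemma sum_4j_minus_3: "(\<Sum>j=1..n. 4 * j - 3) + n = 2 * (n::nat) ^ 2"
  by (induction n) (auto simp: power2_eq_square)

lemma sum_4j_minus_1: "(\<Sum>j=1..n. 4 * j - 1) = 2 * n ^ 2 + (n::nat)"
  by (induction n) (auto simp: power2_eq_square)

theorem proposition4p4:
  fixes \<beta> \<gamma> \<alpha> :: "'a::field fls"
  assumes "pq \<beta> 0 = 0" and "\<forall>n\<ge>1. pq \<beta> n = [:0, 1:] ^ (4 * n - 3)"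
      and "pq \<gamma> 0 = 0" and "\<forall>n\<ge>1. pq \<gamma> n = [:0, 1:] ^ (4 * n - 1)"
      and "\<alpha> = \<beta> + \<gamma>"
  shows "\<forall>n. cf_alg \<alpha> n =
           Running (map (\<lambda>k. [:0, 1:] ^ (4 * k - 3)) [1..<n + 1])
                   (map (\<lambda>k. [:0, 1:] ^ (4 * k - 1)) [1..<n + 1])"
proof
  fix n
  have degree_\<beta>: "degree (pq \<beta> j) = 4 * j - 3" and degree_\<gamma>: "degree (pq \<gamma> j) = 4 * j - 1"
    if "0 < j" for j
    using assms(2,4) that by (simp_all add: degree_linear_power)
  have denom_\<beta>: "cf_denom_degree \<beta> m + m = 2 * m ^ 2" for m
    using sum_4j_minus_3[of m] by (simp add: cf_denom_degree_def degree_\<beta>)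
  have denom_\<gamma>: "cf_denom_degree \<gamma> m = 2 * m ^ 2 + m" for m
    using sum_4j_minus_1[of m] by (simp add: cf_denom_degree_def degree_\<gamma>)
  have "cf_alg \<alpha> n = Running (map (pq \<beta>) [1..<Suc n]) (map (pq \<gamma>) [1..<Suc n])"
  proof (unfold assms(5), rule cf_alg_add)
    fix m
    show "2 * cf_denom_degree \<beta> (Suc m) < cf_denom_degree \<gamma> m + cf_denom_degree \<gamma> (Suc m)"
      using denom_\<beta>[of "Suc m"] by (simp add: denom_\<gamma> power2_eq_square)
    show "2 * cf_denom_degree \<gamma> (Suc m) <
          cf_denom_degree \<beta> (Suc m) + cf_denom_degree \<beta> (Suc (Suc m))"
      using denom_\<beta>[of "Suc m"] denom_\<beta>[of "Suc (Suc m)"] by (simp add: denom_\<gamma> power2_eq_square)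
  qed (use assms(1,3) degree_\<beta> degree_\<gamma> in auto)
  moreover have "map (pq \<beta>) [1..<Suc n] = map (\<lambda>k. [:0, 1:] ^ (4 * k - 3)) [1..<n + 1]"
    "map (pq \<gamma>) [1..<Suc n] = map (\<lambda>k. [:0, 1:] ^ (4 * k - 1)) [1..<n + 1]"
    using assms(2,4) by (auto simp del: upt_Suc)
  ultimately show "cf_alg \<alpha> n = Running (map (\<lambda>k. [:0, 1:] ^ (4 * k - 3)) [1..<n + 1])
                   (map (\<lambda>k. [:0, 1:] ^ (4 * k - 1)) [1..<n + 1])"
    by simp
qed

end
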